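(* Let $H$ and $J$ be finite graphs, let $S\subseteq V(H)$ and $T\subseteq V(J)$ with $|S| = |T|$, and let $f : S\to T$ be a bijection. Let $H\circ_f J$ denote the graph obtained from the disjoint union of $H$ and $J$ by identifying each vertex $x\in S$ with the vertex $f(x)\in T$ (the identified vertex being regarded as $x$), so that $V(H\circ_f J) = V(H)\cup (V(J)\setminus T)$ and $E(H\circ_f J) = E(H)\cup E(J)$ (edges of $J$ incident with $T$ being transferred to the corresponding vertices of $S$). If $S$ is a decycling set of $H$ and $T$ is a decycling set of $J$, then $S$ is a decycling set of $H\circ_f J$. Moreover, if $S$ is a minimum decycling set of $H$ and $T$ is a minimum decycling set of $J$, then $S$ is a minimum decycling set of $H\circ_f J$.
   Context: For a graph $G$, a set $S\subseteq V(G)$ is a decycling set of $G$ if $G - S$ is acyclic (a forest). The decycling number $\nabla(G)$ is the smallest size of a decycling set of $G$, and a decycling set of this size is a minimum decycling set. *)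

theory Defs
  imports Main
begin

type_synonym 'a graph = "'a set \<times> 'a set set"

definition verts :: "'a graph \<Rightarrow> 'a set" where "verts G = fst G"
definition edges :: "'a graph \<Rightarrow> 'a set set" where "edges G = snd G"

definition finite_graph :: "'a graph \<Rightarrow> bool" where
  "finite_graph G \<longleftrightarrow> finite (verts G) \<and>
     (\<forall>e\<in>edges G. \<exists>u v. e = {u, v} \<and> u \<noteq> v \<and> u \<in> verts G \<and> v \<in> verts G)"

definition is_cycle :: "'a graph \<Rightarrow> 'a list \<Rightarrow> bool" where
  "is_cycle G vs \<longleftrightarrow> length vs \<ge> 3 \<and> distinct vs \<and> set vs \<subseteq> verts G \<and>
     (\<forall>i < length vs. {vs ! i, vs ! ((i + 1) mod length vs)} \<in> edges G)"

definition acyclic_graph :: "'a graph \<Rightarrow> bool" where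
  "acyclic_graph G \<longleftrightarrow> \<not> (\<exists>vs. is_cycle G vs)"

definition delete_verts :: "'a graph \<Rightarrow> 'a set \<Rightarrow> 'a graph" where
  "delete_verts G S = (verts G - S, {e \<in> edges G. e \<inter> S = {}})"

definition decycling_set :: "'a graph \<Rightarrow> 'a set \<Rightarrow> bool" where
  "decycling_set G S \<longleftrightarrow> S \<subseteq> verts G \<and> acyclic_graph (delete_verts G S)"

definition decycling_number :: "'a graph \<Rightarrow> nat" where
  "decycling_number G = Min {card S | S. decycling_set G S}"

definition min_decycling_set :: "'a graph \<Rightarrow> 'a set \<Rightarrow> bool" where
  "min_decycling_set G S \<longleftrightarrow> decycling_set G S \<and> card S = decycling_number G"

text \<open>Gluing H and J along a bijection f : S \<rightarrow> T. Vertices of H are tagged Inl,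
  vertices of J are tagged Inr; each vertex y of T is identified with Inl (f\<inverse> y).\<close>
definition glue_map :: "('a \<Rightarrow> 'b) \<Rightarrow> 'a set \<Rightarrow> 'b set \<Rightarrow> 'b \<Rightarrow> 'a + 'b" where
  "glue_map f S T y = (if y \<in> T then Inl (the_inv_into S f y) else Inr y)"

definition glue :: "'a graph \<Rightarrow> 'b graph \<Rightarrow> 'a set \<Rightarrow> 'b set \<Rightarrow> ('a \<Rightarrow> 'b) \<Rightarrow> ('a + 'b) graph" where
  "glue H J S T f =
     (Inl ` verts H \<union> Inr ` (verts J - T),
      (\<lambda>e. Inl ` e) ` edges H \<union> (\<lambda>e. glue_map f S T ` e) ` edges J)"

end

theory Submission
  imports Defs
begin

text \<open>Deleting the glued copy of S from the glued graph leaves a subgraph of the disjoint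
  union of H - S and J - T, and a cycle in a disjoint union lies on one side; hence S stays
  decycling. Conversely, H is a subgraph of the glued graph, so every decycling set D of the
  glued graph meets H in a decycling set of H, whence |D| is at least the decycling number
  of H, which is |S| when S is minimum.\<close>

definition subgraph :: "'a graph \<Rightarrow> 'a graph \<Rightarrow> bool" where
  "subgraph G G' \<longleftrightarrow> verts G \<subseteq> verts G' \<and> edges G \<subseteq> edges G'"

definition map_graph :: "('a \<Rightarrow> 'b) \<Rightarrow> 'a graph \<Rightarrow> 'b graph" where
  "map_graph g G = (g ` verts G, (\<lambda>e. g ` e) ` edges G)"

definition graph_union :: "'a graph \<Rightarrow> 'a graph \<Rightarrow> 'a graph" where
  "graph_union G G' = (verts G \<union> verts G', edges G \<union> edges G')"

definition wf_graph :: "'a graph \<Rightarrow> bool" where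
  "wf_graph G \<longleftrightarrow> (\<forall>e\<in>edges G. e \<subseteq> verts G)"

lemma verts_map_graph [simp]: "verts (map_graph g G) = g ` verts G"
  and edges_map_graph [simp]: "edges (map_graph g G) = (\<lambda>e. g ` e) ` edges G"
  by (simp_all add: map_graph_def verts_def edges_def)

lemma verts_graph_union [simp]: "verts (graph_union G G') = verts G \<union> verts G'"
  and edges_graph_union [simp]: "edges (graph_union G G') = edges G \<union> edges G'"
  by (simp_all add: graph_union_def verts_def edges_def)

lemma verts_delete_verts [simp]: "verts (delete_verts G S) = verts G - S"
  and edges_delete_verts [simp]: "edges (delete_verts G S) = {e \<in> edges G. e \<inter> S = {}}"
  by (simp_all add: delete_verts_def verts_def edges_def)

lemma verts_glue [simp]: "verts (glue H J S T f) = Inl ` verts H \<union> Inr ` (verts J - T)"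
  and edges_glue [simp]:
    "edges (glue H J S T f) = (\<lambda>e. Inl ` e) ` edges H \<union> (\<lambda>e. glue_map f S T ` e) ` edges J"
  by (simp_all add: glue_def verts_def edges_def)

lemma graph_union_commute: "graph_union G G' = graph_union G' G"
  by (simp add: graph_union_def Un_commute)

lemma is_cycle_subgraph: "subgraph G G' \<Longrightarrow> is_cycle G vs \<Longrightarrow> is_cycle G' vs"
  unfolding subgraph_def is_cycle_def by blast

lemma acyclic_graph_subgraph: "subgraph G G' \<Longrightarrow> acyclic_graph G' \<Longrightarrow> acyclic_graph G"
  using is_cycle_subgraph unfolding acyclic_graph_def by blast

lemma is_cycle_map_graph_iff:
  assumes "inj g"
  shows "is_cycle (map_graph g G) (map g vs) \<longleftrightarrow> is_cycle G vs"
proof -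
  have edge_iff: "{g a, g b} \<in> (\<lambda>e. g ` e) ` edges G \<longleftrightarrow> {a, b} \<in> edges G" for a b
    using inj_image_eq_iff[OF assms, of "{a, b}"] by (auto simp: image_iff)
  have nth_map_next: "map g vs ! ((i + 1) mod length vs) = g (vs ! ((i + 1) mod length vs))"
    if "i < length vs" for i
    using that by (intro nth_map mod_less_divisor) linarith
  have "{map g vs ! i, map g vs ! ((i + 1) mod length (map g vs))} \<in> edges (map_graph g G)
      \<longleftrightarrow> {vs ! i, vs ! ((i + 1) mod length vs)} \<in> edges G" if "i < length vs" for i
    by (simp only: length_map nth_map[OF that] nth_map_next[OF that] edges_map_graph
        edge_iff)
  moreover have "distinct (map g vs) \<longleftrightarrow> distinct vs"
    using inj_on_subset[OF assms subset_UNIV] by (simp add: distinct_map)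
  moreover have "set (map g vs) \<subseteq> g ` verts G \<longleftrightarrow> set vs \<subseteq> verts G"
    using assms by (simp add: inj_image_subset_iff)
  ultimately show ?thesis
    unfolding is_cycle_def verts_map_graph length_map by blast
qed

lemma acyclic_graph_map_graph_iff:
  assumes "inj g"
  shows "acyclic_graph (map_graph g G) \<longleftrightarrow> acyclic_graph G"
proof -
  have "\<exists>vs. is_cycle G vs" if cycle: "is_cycle (map_graph g G) ws" for ws
  proof -
    have "set ws \<subseteq> g ` verts G"
      using cycle by (simp add: is_cycle_def)
    then have "map (g \<circ> inv g) ws = ws"
      by (intro map_idI) (auto simp: f_inv_into_f)
    then obtain vs where "ws = map g vs"
      by (metis map_map)
    then show ?thesis
      using cycle is_cycle_map_graph_iff[OF assms] by blast
  qed
  then show ?thesis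
    unfolding acyclic_graph_def using is_cycle_map_graph_iff[OF assms] by blast
qed

lemma is_cycle_graph_union_left:
  assumes wf: "wf_graph G" "wf_graph G'" and disjoint: "verts G \<inter> verts G' = {}"
    and cycle: "is_cycle (graph_union G G') vs" and start: "vs ! 0 \<in> verts G"
  shows "is_cycle G vs"
proof -
  define n where "n = length vs"
  have edge: "{vs ! i, vs ! ((i + 1) mod n)} \<in> edges G \<union> edges G'" if "i < n" for i
    using cycle that by (simp add: is_cycle_def n_def)
  have edge_left: "{vs ! i, vs ! ((i + 1) mod n)} \<in> edges G"
    if "i < n" "vs ! i \<in> verts G" for i
    using edge[OF that(1)] wf(2) disjoint that(2) unfolding wf_graph_def by blast
  have in_left: "vs ! i \<in> verts G" if "i < n" for i
    using that
  proof (induction i)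
    case 0
    then show ?case using start by simp
  next
    case (Suc i)
    then have "(i + 1) mod n = Suc i" by simp
    then show ?case
      using edge_left[of i] Suc wf(1) by (auto simp: wf_graph_def)
  qed
  show ?thesis
    using cycle edge_left in_left by (auto simp: is_cycle_def n_def in_set_conv_nth)
qed

lemma acyclic_graph_union:
  assumes "wf_graph G" "wf_graph G'" "verts G \<inter> verts G' = {}"
    and "acyclic_graph G" "acyclic_graph G'"
  shows "acyclic_graph (graph_union G G')"
  unfolding acyclic_graph_def
proof
  assume "\<exists>vs. is_cycle (graph_union G G') vs"
  then obtain vs where cycle: "is_cycle (graph_union G G') vs" by blast
  then have "vs ! 0 \<in> set vs"
    by (intro nth_mem) (auto simp: is_cycle_def)
  then have "vs ! 0 \<in> verts G \<union> verts G'"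
    using cycle by (auto simp: is_cycle_def)
  then show False
  proof
    assume "vs ! 0 \<in> verts G"
    then show False
      using is_cycle_graph_union_left[OF assms(1-3) cycle] assms(4)
      by (auto simp: acyclic_graph_def)
  next
    assume "vs ! 0 \<in> verts G'"
    moreover have "is_cycle (graph_union G' G) vs"
      using cycle by (simp add: graph_union_commute)
    ultimately show False
      using is_cycle_graph_union_left[of G' G] assms by (auto simp: acyclic_graph_def)
  qed
qed

lemma finite_graph_imp_wf_graph: "finite_graph G \<Longrightarrow> wf_graph G"
  by (fastforce simp: finite_graph_def wf_graph_def)

lemma wf_graph_map_graph: "wf_graph G \<Longrightarrow> wf_graph (map_graph g G)"
  by (auto simp: wf_graph_def)

lemma wf_graph_delete_verts: "wf_graph G \<Longrightarrow> wf_graph (delete_verts G S)"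
  by (auto simp: wf_graph_def)

lemma delete_verts_Int_verts:
  "wf_graph G \<Longrightarrow> delete_verts G (verts G \<inter> D) = delete_verts G D"
  by (auto simp: delete_verts_def verts_def edges_def wf_graph_def)

lemma subgraph_delete_verts_map_graph:
  "subgraph (map_graph g H) G \<Longrightarrow>
     subgraph (map_graph g (delete_verts H (g -` D))) (delete_verts G D)"
  by (auto simp: subgraph_def)

lemma decycling_set_vimage:
  assumes "inj g" "wf_graph H" "subgraph (map_graph g H) G" "decycling_set G D"
  shows "decycling_set H (verts H \<inter> g -` D)"
proof -
  have "acyclic_graph (map_graph g (delete_verts H (g -` D)))"
    using acyclic_graph_subgraph[OF subgraph_delete_verts_map_graph[OF assms(3)]] assms(4)
    by (simp add: decycling_set_def)
  then show ?thesis
    using assms(1,2) by (simp add: decycling_set_def acyclic_graph_map_graph_iff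
        delete_verts_Int_verts)
qed

lemma finite_decycling_cards:
  "finite (verts G) \<Longrightarrow> finite {card S | S. decycling_set G S}"
  by (rule finite_subset[of _ "card ` Pow (verts G)"]) (auto simp: decycling_set_def)

lemma decycling_number_le:
  "finite (verts G) \<Longrightarrow> decycling_set G S \<Longrightarrow> decycling_number G \<le> card S"
  unfolding decycling_number_def by (rule Min_le[OF finite_decycling_cards]) blast+

lemma min_decycling_setI:
  assumes "finite (verts G)" "decycling_set G S"
    and "\<And>D. decycling_set G D \<Longrightarrow> card S \<le> card D"
  shows "min_decycling_set G S"
proof -
  have "decycling_number G = card S"
    unfolding decycling_number_def
    by (rule Min_eqI[OF finite_decycling_cards]) (use assms in auto)
  then show ?thesis
    using assms(2) by (simp add: min_decycling_set_def)
qed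

lemma subgraph_map_graph_Inl_glue: "subgraph (map_graph Inl H) (glue H J S T f)"
  by (auto simp: subgraph_def)

lemma subgraph_delete_verts_glue:
  assumes "bij_betw f S T"
  shows "subgraph (delete_verts (glue H J S T f) (Inl ` S))
           (graph_union (map_graph Inl (delete_verts H S)) (map_graph Inr (delete_verts J T)))"
    (is "subgraph ?G' ?U")
proof -
  have "e' \<in> edges ?U" if "e' \<in> edges ?G'" for e'
  proof -
    from that have disjoint: "e' \<inter> Inl ` S = {}"
      by simp
    from that consider (H) e where "e \<in> edges H" "e' = Inl ` e"
      | (J) e where "e \<in> edges J" "e' = glue_map f S T ` e"
      by auto
    then show ?thesis
    proof cases
      case H
      then show ?thesis
        using disjoint by auto
    next
      case J
      have "y \<notin> T" if "y \<in> e" for y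
      proof
        assume "y \<in> T"
        then have "glue_map f S T y \<in> Inl ` S"
          using assms by (simp add: glue_map_def the_inv_into_into bij_betw_def)
        then show False
          using \<open>y \<in> e\<close> disjoint J(2) by blast
      qed
      then have "e' = Inr ` e" and "e \<inter> T = {}"
        using J(2) by (auto simp: glue_map_def)
      then show ?thesis
        using J(1) by simp
    qed
  qed
  moreover have "verts ?G' \<subseteq> verts ?U"
    by auto
  ultimately show ?thesis
    by (auto simp only: subgraph_def)
qed

lemma decycling_set_glue:
  assumes "wf_graph H" "wf_graph J" "bij_betw f S T"
    and "decycling_set H S" "decycling_set J T"
  shows "decycling_set (glue H J S T f) (Inl ` S)"
proof -
  have "acyclic_graph (graph_union (map_graph Inl (delete_verts H S))
                                 (map_graph Inr (delete_verts J T)))"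
    using assms
    by (intro acyclic_graph_union)
       (auto simp: wf_graph_map_graph wf_graph_delete_verts acyclic_graph_map_graph_iff
         decycling_set_def)
  then show ?thesis
    using acyclic_graph_subgraph[OF subgraph_delete_verts_glue[OF assms(3)]] assms(4)
    by (auto simp: decycling_set_def)
qed

lemma min_decycling_set_glue:
  assumes "finite_graph H" "finite_graph J" "bij_betw f S T"
    and "min_decycling_set H S" "decycling_set J T"
  shows "min_decycling_set (glue H J S T f) (Inl ` S)"
proof (rule min_decycling_setI)
  have fin_H: "finite (verts H)" and fin_J: "finite (verts J)"
    using assms(1,2) by (simp_all add: finite_graph_def)
  then show fin_G: "finite (verts (glue H J S T f))"
    by simp
  show "decycling_set (glue H J S T f) (Inl ` S)"
    using assms by (intro decycling_set_glue) (auto simp: finite_graph_imp_wf_graph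
        min_decycling_set_def)
  fix D
  assume D: "decycling_set (glue H J S T f) D"
  then have "decycling_set H (verts H \<inter> Inl -` D)"
    using assms(1) by (intro decycling_set_vimage)
      (auto simp: finite_graph_imp_wf_graph subgraph_map_graph_Inl_glue)
  then have "card S \<le> card (verts H \<inter> Inl -` D)"
    using assms(4) decycling_number_le[OF fin_H] by (simp add: min_decycling_set_def)
  also have "\<dots> = card (Inl ` (verts H \<inter> Inl -` D) :: ('a + 'b) set)"
    by (simp add: card_image)
  also have "\<dots> \<le> card D"
    using D fin_G by (intro card_mono) (auto simp: decycling_set_def intro: finite_subset)
  finally show "card (Inl ` S :: ('a + 'b) set) \<le> card D"
    by (simp add: card_image)
qed

theorem mainTheorem1:
  fixes H :: "'a graph" and J :: "'b graph" and S :: "'a set" and T :: "'b set"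
    and f :: "'a \<Rightarrow> 'b"
  assumes "finite_graph H" and "finite_graph J"
    and "S \<subseteq> verts H" and "T \<subseteq> verts J"
    and "card S = card T"
    and "bij_betw f S T"
  shows "(decycling_set H S \<and> decycling_set J T \<longrightarrow>
            decycling_set (glue H J S T f) (Inl ` S)) \<and>
         (min_decycling_set H S \<and> min_decycling_set J T \<longrightarrow>
            min_decycling_set (glue H J S T f) (Inl ` S))"
proof (intro conjI impI)
  assume "decycling_set H S \<and> decycling_set J T"
  then show "decycling_set (glue H J S T f) (Inl ` S)"
    using assms(1,2,6) by (simp add: decycling_set_glue finite_graph_imp_wf_graph)
next
  assume "min_decycling_set H S \<and> min_decycling_set J T"
  then show "min_decycling_set (glue H J S T f) (Inl ` S)"
    using min_decycling_set_glue[OF assms(1,2,6)] by (simp add: min_decycling_set_def)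
qed

end
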